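(* Let $\ell, d, h \in \mathbb{N}$ and let $k$ be an odd positive integer, and set $R(d) = \lfloor k/2 \rfloor \cdot d$. Let $f: \mathbb{R}^{\ell} \to \mathbb{R}^{\ell}$ be a normalization-free one-dimensional convolutional neural network of depth $d$ with ReLU nonlinearity, i.e. $$\mathbf{z}^{(1)} = C_{in}(\mathbf{x}), \qquad \mathbf{z}^{(i)} = \sigma\big(C_i(\mathbf{z}^{(i-1)})\big) \ \ \forall i \in \{2,\dots,d\}, \qquad f(\mathbf{x}) = C_{out}\big(\mathbf{z}^{(d-1)}\big),$$ where $\sigma$ is the (elementwise) ReLU, and $C_{in}, C_i, C_{out}$ are arbitrary bias-enabled one-dimensional convolutional layers with kernel size $k$, zero-padding of width $\lfloor k/2 \rfloor$ on each side, unit stride and no dilation (so each maps length-$\ell$ sequences to length-$\ell$ sequences), with channel dimensions $1 \to h$ for $C_{in}$, $h \to h$ for each $C_i$, and $h \to 1$ for $C_{out}$. Assume $R(d) < \frac{\ell}{2} - 2$. Then $f$ does not localize any index $i^* \in \{R(d)+1, R(d)+2, \dots, \ell - R(d) - 1\}$, in the following sense: for every such $i^*$ there exists $j \in \{1,\dots,\ell\} \setminus \{i^*\}$ with $\mathbb{E}_{X \sim P_{f_{i^*}}}[X] = \mathbb{E}_{X \sim P_{f_j}}[X]$.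
   Context: For $f: \mathbb{R}^{\ell} \to \mathbb{R}^{\ell}$ and $i \in \{1,\dots,\ell\}$, $f_i: \mathbb{R}^{\ell} \to \mathbb{R}$ denotes the $i$-th output coordinate of $f$, and $P_{f_i}$ denotes the distribution of $f_i(\mathbf{x})$ when $\mathbf{x} \sim \mathcal{N}(\mathbf{0}_{\ell}, I_{\ell})$ (the pushforward of the standard Gaussian on $\mathbb{R}^{\ell}$ under $f_i$). The function $f$ is said to localize an index $i^* \in \{1,\dots,\ell\}$ if $\mathbb{E}_{X \sim P_{f_{i^*}}}[X] \neq \mathbb{E}_{X \sim P_{f_j}}[X]$ for all $j \in \{1,\dots,\ell\} \setminus \{i^*\}$. *)

theory Defs
  imports "HOL-Probability.Probability"
begin

text \<open>Sequences of length l with c channels are modelled as functions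
  z :: nat => nat => real, z ch p = value of channel ch (0-based) at position p
  (1-based, p in {1..l}). Inputs x :: nat => real are read at positions 1..l.\<close>

definition relu :: "real \<Rightarrow> real" where
  "relu t = max 0 t"

definition zpad :: "nat \<Rightarrow> (nat \<Rightarrow> nat \<Rightarrow> real) \<Rightarrow> nat \<Rightarrow> int \<Rightarrow> real" where
  "zpad l z c q = (if 1 \<le> q \<and> q \<le> int l then z c (nat q) else 0)"

definition conv1d :: "nat \<Rightarrow> nat \<Rightarrow> nat \<Rightarrow> (nat \<Rightarrow> nat \<Rightarrow> nat \<Rightarrow> real) \<Rightarrow> (nat \<Rightarrow> real)
    \<Rightarrow> (nat \<Rightarrow> nat \<Rightarrow> real) \<Rightarrow> (nat \<Rightarrow> nat \<Rightarrow> real)" where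
  "conv1d l k cin W b z = (\<lambda>co p. b co +
      (\<Sum>ci<cin. \<Sum>t<k. W co ci t * zpad l z ci (int p + int t - int (k div 2))))"

text \<open>Hidden representations: z 1 = C_in(x), z i = relu(C_i(z (i-1))) for i \<ge> 2.
  C_in has 1 input channel (channel 0 carries x), C_i have h input channels.
  z 0 is never used.\<close>
fun cnn_z :: "nat \<Rightarrow> nat \<Rightarrow> nat \<Rightarrow> (nat \<Rightarrow> nat \<Rightarrow> nat \<Rightarrow> real) \<Rightarrow> (nat \<Rightarrow> real)
    \<Rightarrow> (nat \<Rightarrow> nat \<Rightarrow> nat \<Rightarrow> nat \<Rightarrow> real) \<Rightarrow> (nat \<Rightarrow> nat \<Rightarrow> real)
    \<Rightarrow> (nat \<Rightarrow> real) \<Rightarrow> nat \<Rightarrow> (nat \<Rightarrow> nat \<Rightarrow> real)" where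
  "cnn_z l k h Win bin Ws bs x 0 = (\<lambda>_ _. 0)"
| "cnn_z l k h Win bin Ws bs x (Suc 0) = conv1d l k 1 Win bin (\<lambda>_ p. x p)"
| "cnn_z l k h Win bin Ws bs x (Suc (Suc i)) =
     (\<lambda>c p. relu (conv1d l k h (Ws (Suc (Suc i))) (bs (Suc (Suc i)))
                      (cnn_z l k h Win bin Ws bs x (Suc i)) c p))"

definition cnn :: "nat \<Rightarrow> nat \<Rightarrow> nat \<Rightarrow> nat \<Rightarrow> (nat \<Rightarrow> nat \<Rightarrow> nat \<Rightarrow> real) \<Rightarrow> (nat \<Rightarrow> real)
    \<Rightarrow> (nat \<Rightarrow> nat \<Rightarrow> nat \<Rightarrow> nat \<Rightarrow> real) \<Rightarrow> (nat \<Rightarrow> nat \<Rightarrow> real)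
    \<Rightarrow> (nat \<Rightarrow> nat \<Rightarrow> nat \<Rightarrow> real) \<Rightarrow> (nat \<Rightarrow> real)
    \<Rightarrow> (nat \<Rightarrow> real) \<Rightarrow> nat \<Rightarrow> real" where
  "cnn l k h d Win bin Ws bs Wout bout x p =
     conv1d l k h Wout bout (cnn_z l k h Win bin Ws bs x (d - 1)) 0 p"

definition std_gauss :: "nat \<Rightarrow> (nat \<Rightarrow> real) measure" where
  "std_gauss l = PiM {1..l} (\<lambda>_. density lborel std_normal_density)"

definition pushforward_mean :: "nat \<Rightarrow> ((nat \<Rightarrow> real) \<Rightarrow> nat \<Rightarrow> real) \<Rightarrow> nat \<Rightarrow> real" where
  "pushforward_mean l f i = (\<integral>X. X \<partial>(distr (std_gauss l) borel (\<lambda>x. f x i)))"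

definition localizes :: "nat \<Rightarrow> ((nat \<Rightarrow> real) \<Rightarrow> nat \<Rightarrow> real) \<Rightarrow> nat \<Rightarrow> bool" where
  "localizes l f istar \<longleftrightarrow>
     (\<forall>j \<in> {1..l} - {istar}. pushforward_mean l f istar \<noteq> pushforward_mean l f j)"

end

theory Submission
  imports Defs
begin

text \<open>Away from the boundary a convolutional network is translation equivariant: every
  layer only reads a window of radius \<open>k div 2\<close>, so the output at position p
  depends only on the inputs at distance at most \<open>(k div 2) * d\<close> from p, and shifting
  the input by one position shifts such outputs by one position. Composing with the
  cyclic shift of the coordinates, which preserves the standard Gaussian, shows that
  the outputs at \<open>i\<^sup>*\<close> and \<open>i\<^sup>* + 1\<close> have the same distribution,
  hence the same mean.\<close>

lemma borel_measurable_conv1d: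
  assumes "\<And>ci q. q \<in> {1..l} \<Longrightarrow> (\<lambda>x. Z x ci q) \<in> borel_measurable M"
  shows "(\<lambda>x. conv1d l k cin W b (Z x) c p) \<in> borel_measurable M"
proof -
  have "(\<lambda>x. zpad l (Z x) ci q) \<in> borel_measurable M" for ci q
    using assms[of "nat q" ci] by (cases "1 \<le> q \<and> q \<le> int l") (auto simp: zpad_def nat_le_iff)
  then show ?thesis
    unfolding conv1d_def by measurable
qed

lemma cnn_z_Suc:
  "0 < i \<Longrightarrow> cnn_z l k h Win bin Ws bs x (Suc i) =
     (\<lambda>c p. relu (conv1d l k h (Ws (Suc i)) (bs (Suc i)) (cnn_z l k h Win bin Ws bs x i) c p))"
  by (cases i) auto

lemma borel_measurable_cnn_z:
  assumes "\<And>q. q \<in> {1..l} \<Longrightarrow> (\<lambda>x. x q) \<in> borel_measurable M"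
  shows "(\<lambda>x. cnn_z l k h Win bin Ws bs x i c p) \<in> borel_measurable M"
proof (induction i arbitrary: c p)
  case (Suc i)
  show ?case
  proof (cases "0 < i")
    case True
    then show ?thesis
      using Suc.IH unfolding cnn_z_Suc[OF True] relu_def
      by (intro borel_measurable_max borel_measurable_const borel_measurable_conv1d)
  next
    case False
    then show ?thesis
      using assms by (auto intro: borel_measurable_conv1d)
  qed
qed simp

lemma borel_measurable_cnn:
  assumes "\<And>q. q \<in> {1..l} \<Longrightarrow> (\<lambda>x. x q) \<in> borel_measurable M"
  shows "(\<lambda>x. cnn l k h d Win bin Ws bs Wout bout x p) \<in> borel_measurable M"
  unfolding cnn_def using assms by (intro borel_measurable_conv1d borel_measurable_cnn_z)

lemma conv1d_shift:
  assumes "k div 2 < p" "p + k div 2 + s \<le> l"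
    and "\<And>ci q. ci < cin \<Longrightarrow> p - k div 2 \<le> q \<Longrightarrow> q \<le> p + k div 2 \<Longrightarrow> z ci q = z' ci (q + s)"
  shows "conv1d l k cin W b z c p = conv1d l k cin W b z' c (p + s)"
  unfolding conv1d_def
proof (intro arg_cong[where f = "\<lambda>u. b c + u"] sum.cong refl arg_cong[where f = "\<lambda>u. _ * u"])
  fix ci t
  assume "ci \<in> {..<cin}" "t \<in> {..<k}"
  moreover define q where "q = p + t - k div 2"
  ultimately have "ci < cin" "p - k div 2 \<le> q" "q \<le> p + k div 2" "1 \<le> q"
    and pos: "int p + int t - int (k div 2) = int q" "int (p + s) + int t - int (k div 2) = int (q + s)"
    using assms(1) by auto
  then show "zpad l z ci (int p + int t - int (k div 2)) = zpad l z' ci (int (p + s) + int t - int (k div 2))"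
    unfolding pos using assms by (simp add: zpad_def flip: of_nat_add)
qed

lemma cnn_z_shift:
  assumes "k div 2 * i < p" "p + k div 2 * i + s \<le> l"
    and "\<And>q. p - k div 2 * i \<le> q \<Longrightarrow> q \<le> p + k div 2 * i \<Longrightarrow> y q = x (q + s)"
  shows "cnn_z l k h Win bin Ws bs y i c p = cnn_z l k h Win bin Ws bs x i c (p + s)"
  using assms
proof (induction i arbitrary: c p)
  case (Suc i)
  show ?case
  proof (cases "0 < i")
    case True
    have "cnn_z l k h Win bin Ws bs y i ci q = cnn_z l k h Win bin Ws bs x i ci (q + s)"
      if "p - k div 2 \<le> q" "q \<le> p + k div 2" for ci q
    proof (rule Suc.IH)
      have "p - k div 2 * Suc i \<le> q - k div 2 * i" "q + k div 2 * i \<le> p + k div 2 * Suc i"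
        using that Suc.prems(1) by (simp_all add: mult_Suc_right; linarith)+
      then show "\<And>q'. q - k div 2 * i \<le> q' \<Longrightarrow> q' \<le> q + k div 2 * i \<Longrightarrow> y q' = x (q' + s)"
        by (intro Suc.prems(3)) auto
      show "k div 2 * i < q" "q + k div 2 * i + s \<le> l"
        using that Suc.prems(1,2) by (simp_all add: mult_Suc_right; linarith)+
    qed
    then show ?thesis
      unfolding cnn_z_Suc[OF True] using Suc.prems by (subst conv1d_shift) auto
  next
    case False
    then show ?thesis
      using Suc.prems by (auto intro: conv1d_shift)
  qed
qed simp

lemma cnn_shift:
  assumes "1 \<le> d" "k div 2 * d < p" "p + k div 2 * d + s \<le> l"
    and "\<And>q. p - k div 2 * d \<le> q \<Longrightarrow> q \<le> p + k div 2 * d \<Longrightarrow> y q = x (q + s)"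
  shows "cnn l k h d Win bin Ws bs Wout bout y p = cnn l k h d Win bin Ws bs Wout bout x (p + s)"
proof -
  obtain e where d: "d = Suc e"
    using assms(1) by (cases d) auto
  have "cnn_z l k h Win bin Ws bs y e ci q = cnn_z l k h Win bin Ws bs x e ci (q + s)"
    if "p - k div 2 \<le> q" "q \<le> p + k div 2" for ci q
  proof (rule cnn_z_shift)
    have "p - k div 2 * d \<le> q - k div 2 * e" "q + k div 2 * e \<le> p + k div 2 * d"
      using that assms(2) unfolding d by (simp_all add: mult_Suc_right; linarith)+
    then show "\<And>q'. q - k div 2 * e \<le> q' \<Longrightarrow> q' \<le> q + k div 2 * e \<Longrightarrow> y q' = x (q' + s)"
      by (intro assms(4)) auto
    show "k div 2 * e < q" "q + k div 2 * e + s \<le> l"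
      using that assms(2,3) unfolding d by (simp_all add: mult_Suc_right; linarith)+
  qed
  moreover have "k div 2 < p" "p + k div 2 + s \<le> l"
    using assms(2,3) unfolding d by (simp_all add: mult_Suc_right)
  ultimately show ?thesis
    unfolding cnn_def d by (intro conv1d_shift) auto
qed

lemma measurable_std_gauss_component:
  "p \<in> {1..l} \<Longrightarrow> (\<lambda>x. x p) \<in> borel_measurable (std_gauss l)"
  unfolding std_gauss_def
  by (subst measurable_cong_sets[OF refl real_distribution.events_eq_borel[OF real_dist_normal_dist], symmetric])
    (rule measurable_component_singleton)

lemma measurable_std_gauss_reindex:
  assumes "\<pi> \<in> {1..l} \<rightarrow> {1..l}"
  shows "(\<lambda>x. \<lambda>n\<in>{1..l}. x (\<pi> n)) \<in> measurable (std_gauss l) (std_gauss l)"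
  unfolding std_gauss_def using assms by (intro measurable_restrict measurable_component_singleton) auto

lemma distr_std_gauss_reindex:
  assumes "inj_on \<pi> {1..l}" "\<pi> \<in> {1..l} \<rightarrow> {1..l}"
  shows "distr (std_gauss l) (std_gauss l) (\<lambda>x. \<lambda>n\<in>{1..l}. x (\<pi> n)) = std_gauss l"
  unfolding std_gauss_def by (rule distr_PiM_reindex[OF _ assms]) (simp add: prob_space_normal_density)

lemma pushforward_mean_eq:
  assumes "T \<in> measurable (std_gauss l) (std_gauss l)" "distr (std_gauss l) (std_gauss l) T = std_gauss l"
    and "(\<lambda>x. f x i) \<in> borel_measurable (std_gauss l)"
    and "\<And>x. f (T x) i = f x j"
  shows "pushforward_mean l f j = pushforward_mean l f i"
proof -
  have "distr (std_gauss l) borel (\<lambda>x. f x j) = distr (distr (std_gauss l) (std_gauss l) T) borel (\<lambda>x. f x i)"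
    using assms(1,3) by (simp add: distr_distr comp_def assms(4))
  then show ?thesis
    unfolding pushforward_mean_def assms(2) by simp
qed

definition cyclic_succ :: "nat \<Rightarrow> nat \<Rightarrow> nat" where
  "cyclic_succ l n = (if n < l then Suc n else 1)"

lemma inj_on_cyclic_succ: "inj_on (cyclic_succ l) {1..l}"
  unfolding cyclic_succ_def inj_on_def by auto

lemma cyclic_succ_funcset: "cyclic_succ l \<in> {1..l} \<rightarrow> {1..l}"
  unfolding cyclic_succ_def by auto

theorem propositionC1:
  fixes l d h k :: nat
    and Win Wout :: "nat \<Rightarrow> nat \<Rightarrow> nat \<Rightarrow> real" and bin bout :: "nat \<Rightarrow> real"
    and Ws :: "nat \<Rightarrow> nat \<Rightarrow> nat \<Rightarrow> nat \<Rightarrow> real" and bs :: "nat \<Rightarrow> nat \<Rightarrow> real"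
    and istar :: nat
  assumes "odd k"
    and "d \<ge> 2"
    and "real ((k div 2) * d) < real l / 2 - 2"
    and "istar \<in> {(k div 2) * d + 1 .. l - (k div 2) * d - 1}"
  shows "\<not> localizes l (cnn l k h d Win bin Ws bs Wout bout) istar"
proof -
  define f where "f = cnn l k h d Win bin Ws bs Wout bout"
  define shift where "shift x = (\<lambda>n\<in>{1..l}. x (cyclic_succ l n))" for x :: "nat \<Rightarrow> real"
  have window: "k div 2 * d < istar" "istar + k div 2 * d + 1 \<le> l"
    using assms(4) by auto
  have "f (shift x) istar = f x (istar + 1)" for x
    unfolding f_def using assms(2) window
    by (intro cnn_shift) (auto simp: shift_def cyclic_succ_def)
  then have "pushforward_mean l f (istar + 1) = pushforward_mean l f istar"
  proof (rule pushforward_mean_eq[rotated 3])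
    show "shift \<in> measurable (std_gauss l) (std_gauss l)"
      unfolding shift_def by (intro measurable_std_gauss_reindex cyclic_succ_funcset)
    show "distr (std_gauss l) (std_gauss l) shift = std_gauss l"
      unfolding shift_def by (intro distr_std_gauss_reindex inj_on_cyclic_succ cyclic_succ_funcset)
    show "(\<lambda>x. f x istar) \<in> borel_measurable (std_gauss l)"
      unfolding f_def by (intro borel_measurable_cnn measurable_std_gauss_component)
  qed
  moreover have "istar + 1 \<in> {1..l} - {istar}"
    using window by auto
  ultimately show ?thesis
    unfolding localizes_def f_def by metis
qed

end
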